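(* Let $M\geq 1$. A seller holds a set $\mathbb{M}$ of $M$ different goods, one unit of each, and has an arbitrary valuation function $\sigma$ over bundles of goods ($\sigma(X)$ is the seller's value for $X\subseteq\mathbb{M}$). The buyer has a unit-demand valuation: he values each item $i$ at $\beta_i$ and wants at most one item. The price of item $i$ is fixed exogenously at $p_i$, and both agents have utilities quasi-linear in money. Then the competitive ratio of any DSIC mechanism is at most $1/M$.
   Context: Selling item $i$ at price $p_i$ gives the buyer utility $b_i=\beta_i-p_i$ and the seller utility $s_i=p_i+\sigma(\mathbb{M}\setminus\{i\})-\sigma(\mathbb{M})$; option $0$ (no trade) gives both utility $0$. A mechanism receives the agents' reported valuations and outputs a probability distribution $(r_0,\dots,r_M)$ over which item (if any) is traded. It is DSIC if for each agent reporting the true valuation maximizes his expected utility ($\sum_i r_i b_i$ for the buyer, $\sum_i r_i s_i$ for the seller) whatever the other agent reports. The optimal gain-from-trade subject to individual rationality is $OPT=\max\{b_i+s_i: 0\leq i\leq M,\ b_i\geq 0,\ s_i\geq 0\}$ (with $b_0=s_0=0$); the mechanism's gain under truthful reports is $G=\sum_{i=1}^M r_i(b_i+s_i)$, and its competitive ratio is the minimum of $G/OPT$ over all valuation profiles. *)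

theory Defs
  imports Complex_Main "HOL-Library.Extended_Real"
begin

text \<open>Items are 1..M; option 0 is no trade. The seller initially holds all of {1..M}.\<close>

definition items :: "nat \<Rightarrow> nat set" where
  "items M = {1..M}"

definition valid_buyer :: "nat \<Rightarrow> (nat \<Rightarrow> real) \<Rightarrow> bool" where
  "valid_buyer M beta \<longleftrightarrow> (\<forall>i\<in>items M. beta i \<ge> 0) \<and> (\<forall>i. i \<notin> items M \<longrightarrow> beta i = 0)"

definition valid_seller :: "nat \<Rightarrow> (nat set \<Rightarrow> real) \<Rightarrow> bool" where
  "valid_seller M sigma \<longleftrightarrow> (\<forall>X. \<not> X \<subseteq> items M \<longrightarrow> sigma X = 0)"

definition bu :: "(nat \<Rightarrow> real) \<Rightarrow> (nat \<Rightarrow> real) \<Rightarrow> nat \<Rightarrow> real" where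
  "bu p beta i = beta i - p i"

definition su :: "nat \<Rightarrow> (nat \<Rightarrow> real) \<Rightarrow> (nat set \<Rightarrow> real) \<Rightarrow> nat \<Rightarrow> real" where
  "su M p sigma i = p i + sigma (items M - {i}) - sigma (items M)"

text \<open>A mechanism maps reports (beta, sigma) to probabilities r 0, ..., r M.\<close>
type_synonym mechanism = "(nat \<Rightarrow> real) \<Rightarrow> (nat set \<Rightarrow> real) \<Rightarrow> nat \<Rightarrow> real"

definition is_mechanism :: "nat \<Rightarrow> mechanism \<Rightarrow> bool" where
  "is_mechanism M mech \<longleftrightarrow>
     (\<forall>beta sigma. valid_buyer M beta \<and> valid_seller M sigma \<longrightarrow>
        (\<forall>i\<in>{0..M}. mech beta sigma i \<ge> 0) \<and> (\<Sum>i=0..M. mech beta sigma i) = 1)"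

definition buyer_util :: "nat \<Rightarrow> (nat \<Rightarrow> real) \<Rightarrow> (nat \<Rightarrow> real) \<Rightarrow> (nat \<Rightarrow> real) \<Rightarrow> real" where
  "buyer_util M p r beta = (\<Sum>i\<in>items M. r i * bu p beta i)"

definition seller_util :: "nat \<Rightarrow> (nat \<Rightarrow> real) \<Rightarrow> (nat \<Rightarrow> real) \<Rightarrow> (nat set \<Rightarrow> real) \<Rightarrow> real" where
  "seller_util M p r sigma = (\<Sum>i\<in>items M. r i * su M p sigma i)"

definition DSIC :: "nat \<Rightarrow> (nat \<Rightarrow> real) \<Rightarrow> mechanism \<Rightarrow> bool" where
  "DSIC M p mech \<longleftrightarrow>
     (\<forall>beta beta' sigma. valid_buyer M beta \<and> valid_buyer M beta' \<and> valid_seller M sigma \<longrightarrow>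
        buyer_util M p (mech beta' sigma) beta \<le> buyer_util M p (mech beta sigma) beta) \<and>
     (\<forall>beta sigma sigma'. valid_buyer M beta \<and> valid_seller M sigma \<and> valid_seller M sigma' \<longrightarrow>
        seller_util M p (mech beta sigma') sigma \<le> seller_util M p (mech beta sigma) sigma)"

definition OPT :: "nat \<Rightarrow> (nat \<Rightarrow> real) \<Rightarrow> (nat \<Rightarrow> real) \<Rightarrow> (nat set \<Rightarrow> real) \<Rightarrow> real" where
  "OPT M p beta sigma = Max ({0} \<union> {bu p beta i + su M p sigma i | i. i \<in> items M \<and>
        bu p beta i \<ge> 0 \<and> su M p sigma i \<ge> 0})"

definition gain :: "nat \<Rightarrow> (nat \<Rightarrow> real) \<Rightarrow> mechanism \<Rightarrow> (nat \<Rightarrow> real) \<Rightarrow> (nat set \<Rightarrow> real) \<Rightarrow> real" where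
  "gain M p mech beta sigma =
     (\<Sum>i\<in>items M. mech beta sigma i * (bu p beta i + su M p sigma i))"

definition comp_ratio :: "nat \<Rightarrow> (nat \<Rightarrow> real) \<Rightarrow> mechanism \<Rightarrow> ereal" where
  "comp_ratio M p mech =
     (INF bs \<in> {(beta, sigma). valid_buyer M beta \<and> valid_seller M sigma \<and> OPT M p beta sigma > 0}.
        ereal (gain M p mech (fst bs) (snd bs) / OPT M p (fst bs) (snd bs)))"

end

theory Submission
  imports Defs
begin

text \<open>Fix a buyer and let the seller's item utilities walk down a staircase: in profile k the items
  below k are worthless to trade (the seller loses L > 2 max b), item k gives the seller 0 and
  every later item gives the seller \<epsilon> > 0. The buyer's utilities decrease so steeply that in
  profile k item k carries almost all of the optimal gain, so a mechanism with ratio c must trade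
  item k with probability at least c - \<eta>. Truthfulness of the seller between profiles k and k+1
  then forces her utility in profile k to exceed the one in profile k+1 by \<epsilon> times that
  probability; summing these M - 1 gaps gives her utility about \<epsilon> (M - 1)(c - \<eta>) in
  profile 1, while in profile 1 it is at most \<epsilon> (1 - (c - \<eta>)). Hence M c \<le> 1 up to
  errors that vanish as \<epsilon> grows.\<close>

definition buyer_of_utils :: "nat \<Rightarrow> (nat \<Rightarrow> real) \<Rightarrow> (nat \<Rightarrow> real) \<Rightarrow> nat \<Rightarrow> real" where
  "buyer_of_utils M p b i = (if i \<in> items M then b i + p i else 0)"

definition seller_of_utils :: "nat \<Rightarrow> (nat \<Rightarrow> real) \<Rightarrow> (nat \<Rightarrow> real) \<Rightarrow> nat set \<Rightarrow> real" where
  "seller_of_utils M p s X = (if X \<subseteq> items M then (\<Sum>i\<in>items M - X. s i - p i) else 0)"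

lemma finite_items [simp]: "finite (items M)"
  by (simp add: items_def)

lemma valid_buyer_buyer_of_utils:
  "(\<And>i. i \<in> items M \<Longrightarrow> 0 \<le> b i + p i) \<Longrightarrow> valid_buyer M (buyer_of_utils M p b)"
  unfolding valid_buyer_def buyer_of_utils_def by auto

lemma valid_seller_seller_of_utils: "valid_seller M (seller_of_utils M p s)"
  unfolding valid_seller_def seller_of_utils_def by auto

lemma bu_buyer_of_utils: "i \<in> items M \<Longrightarrow> bu p (buyer_of_utils M p b) i = b i"
  unfolding bu_def buyer_of_utils_def by auto

lemma su_seller_of_utils:
  assumes "i \<in> items M"
  shows "su M p (seller_of_utils M p s) i = s i"
proof -
  have "items M - (items M - {i}) = {i}" using assms by auto
  then show ?thesis unfolding su_def seller_of_utils_def by auto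
qed

lemma OPT_ge_item:
  assumes "i \<in> items M" "0 \<le> bu p beta i" "0 \<le> su M p sigma i"
  shows "bu p beta i + su M p sigma i \<le> OPT M p beta sigma"
proof -
  let ?S = "{bu p beta i + su M p sigma i | i. i \<in> items M \<and> 0 \<le> bu p beta i \<and> 0 \<le> su M p sigma i}"
  have "?S \<subseteq> (\<lambda>i. bu p beta i + su M p sigma i) ` items M" by auto
  then have "finite ({0} \<union> ?S)" using finite_subset by auto
  moreover have "bu p beta i + su M p sigma i \<in> {0} \<union> ?S" using assms by blast
  ultimately show ?thesis unfolding OPT_def by (rule Max_ge)
qed

lemma is_mechanism_nonneg:
  "is_mechanism M mech \<Longrightarrow> valid_buyer M beta \<Longrightarrow> valid_seller M sigma \<Longrightarrow> i \<in> items M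
    \<Longrightarrow> 0 \<le> mech beta sigma i"
  unfolding is_mechanism_def items_def by auto

lemma is_mechanism_sum_items_le_1:
  assumes "is_mechanism M mech" "valid_buyer M beta" "valid_seller M sigma"
  shows "(\<Sum>i\<in>items M. mech beta sigma i) \<le> 1"
proof -
  have "{0..M} = insert 0 (items M)" "0 \<notin> items M" unfolding items_def by auto
  then have "(\<Sum>i=0..M. mech beta sigma i) = mech beta sigma 0 + (\<Sum>i\<in>items M. mech beta sigma i)"
    by simp
  moreover have "0 \<le> mech beta sigma 0" "(\<Sum>i=0..M. mech beta sigma i) = 1"
    using assms unfolding is_mechanism_def by auto
  ultimately show ?thesis by linarith
qed

lemma weighted_sum_le_single:
  fixes r g :: "'a \<Rightarrow> real"
  assumes "finite I" "k \<in> I" "\<And>i. i \<in> I \<Longrightarrow> 0 \<le> r i" "sum r I \<le> 1"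
    and "\<And>i. i \<in> I - {k} \<Longrightarrow> g i \<le> e" "0 \<le> e"
  shows "(\<Sum>i\<in>I. r i * g i) \<le> r k * g k + e"
proof -
  have "(\<Sum>i\<in>I. r i * g i) = r k * g k + (\<Sum>i\<in>I - {k}. r i * g i)"
    using assms(1,2) by (simp add: sum.remove)
  also have "(\<Sum>i\<in>I - {k}. r i * g i) \<le> (\<Sum>i\<in>I - {k}. r i * e)"
    using assms(3,5) by (intro sum_mono mult_left_mono) auto
  also have "\<dots> \<le> (\<Sum>i\<in>I. r i * e)"
    using assms(1,3,6) by (intro sum_mono2) auto
  also have "\<dots> \<le> e"
    using assms(4,6) by (simp add: sum_distrib_right[symmetric] mult_left_le_one_le sum_nonneg assms(3))
  finally show ?thesis by simp
qed

lemma gain_ge_of_comp_ratio_ge: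
  assumes "ereal c \<le> comp_ratio M p mech" "valid_buyer M beta" "valid_seller M sigma"
    "0 < OPT M p beta sigma"
  shows "c * OPT M p beta sigma \<le> gain M p mech beta sigma"
proof -
  have "comp_ratio M p mech \<le> ereal (gain M p mech beta sigma / OPT M p beta sigma)"
    unfolding comp_ratio_def by (rule INF_lower2[of "(beta, sigma)"]) (use assms in auto)
  with assms(1) have "ereal c \<le> ereal (gain M p mech beta sigma / OPT M p beta sigma)"
    by (rule order_trans)
  then have "c \<le> gain M p mech beta sigma / OPT M p beta sigma" by simp
  then show ?thesis using assms(4) by (simp add: pos_le_divide_eq)
qed

locale staircase_profiles =
  fixes M :: nat and p :: "nat \<Rightarrow> real" and mech :: mechanism and c :: real
    and b :: "nat \<Rightarrow> real" and \<eta> \<epsilon> L :: real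
  assumes M_pos: "1 \<le> M"
    and mechanism: "is_mechanism M mech"
    and dsic: "DSIC M p mech"
    and c_pos: "0 < c"
    and ratio: "\<And>beta sigma. valid_buyer M beta \<Longrightarrow> valid_seller M sigma \<Longrightarrow>
      0 < OPT M p beta sigma \<Longrightarrow> c * OPT M p beta sigma \<le> gain M p mech beta sigma"
    and b_pos: "\<And>i. i \<in> items M \<Longrightarrow> 0 < b i"
    and b_valid: "\<And>i. i \<in> items M \<Longrightarrow> 0 \<le> b i + p i"
    and b_steep: "\<And>i k. i \<in> items M \<Longrightarrow> k < i \<Longrightarrow> b i + \<epsilon> \<le> \<eta> * b k"
    and L_large: "\<And>i. i \<in> items M \<Longrightarrow> 2 * b i \<le> L"
    and \<eta>_nonneg: "0 \<le> \<eta>"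
    and \<epsilon>_nonneg: "0 \<le> \<epsilon>"
begin

definition stair :: "nat \<Rightarrow> nat \<Rightarrow> real" where
  "stair k i = (if i < k then - L else if i = k then 0 else \<epsilon>)"

definition buyer :: "nat \<Rightarrow> real" where
  "buyer = buyer_of_utils M p b"

definition seller :: "nat \<Rightarrow> nat set \<Rightarrow> real" where
  "seller k = seller_of_utils M p (stair k)"

definition alloc :: "nat \<Rightarrow> nat \<Rightarrow> real" where
  "alloc k = mech buyer (seller k)"

definition seller_payoff :: "nat \<Rightarrow> real" where
  "seller_payoff k = (\<Sum>i\<in>items M. alloc k i * stair k i)"

lemma valid_buyer: "valid_buyer M buyer"
  unfolding buyer_def using b_valid by (rule valid_buyer_buyer_of_utils)

lemma valid_seller: "valid_seller M (seller k)"
  unfolding seller_def by (rule valid_seller_seller_of_utils)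

lemma alloc_nonneg: "i \<in> items M \<Longrightarrow> 0 \<le> alloc k i"
  unfolding alloc_def using is_mechanism_nonneg[OF mechanism valid_buyer valid_seller] .

lemma sum_alloc_le_1: "(\<Sum>i\<in>items M. alloc k i) \<le> 1"
  unfolding alloc_def using is_mechanism_sum_items_le_1[OF mechanism valid_buyer valid_seller] .

lemma alloc_le_1:
  assumes "j \<in> items M"
  shows "alloc k j \<le> 1"
proof -
  have "alloc k j \<le> (\<Sum>i\<in>items M. alloc k i)"
    using assms alloc_nonneg by (intro member_le_sum) auto
  then show ?thesis using sum_alloc_le_1[of k] by linarith
qed

lemma L_nonneg: "0 \<le> L"
  using L_large[of M] b_pos[of M] M_pos by (auto simp: items_def)

lemma bu_buyer: "i \<in> items M \<Longrightarrow> bu p buyer i = b i"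
  unfolding buyer_def by (rule bu_buyer_of_utils)

lemma su_seller: "i \<in> items M \<Longrightarrow> su M p (seller k) i = stair k i"
  unfolding seller_def by (rule su_seller_of_utils)

lemma gain_eq: "gain M p mech buyer (seller k) = (\<Sum>i\<in>items M. alloc k i * b i) + seller_payoff k"
  unfolding gain_def seller_payoff_def alloc_def buyer_def seller_def
  by (simp add: bu_buyer_of_utils su_seller_of_utils sum.distrib[symmetric] distrib_left cong: sum.cong)

lemma seller_util_eq: "seller_util M p (alloc j) (seller k) = (\<Sum>i\<in>items M. alloc j i * stair k i)"
  unfolding seller_util_def seller_def by (simp add: su_seller_of_utils cong: sum.cong)

lemma alloc_diagonal_ge:
  assumes k: "k \<in> items M"
  shows "c - \<eta> \<le> alloc k k"
proof -
  have "b k \<le> OPT M p buyer (seller k)"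
    using OPT_ge_item[OF k, of p buyer "seller k"] k b_pos[OF k]
    by (simp add: bu_buyer su_seller stair_def)
  then have "c * b k \<le> gain M p mech buyer (seller k)"
    using ratio[OF valid_buyer valid_seller] b_pos[OF k] c_pos
    by (meson less_le_trans mult_left_mono order_trans less_imp_le)
  also have "\<dots> = (\<Sum>i\<in>items M. alloc k i * (b i + stair k i))"
    unfolding gain_eq seller_payoff_def by (simp add: sum.distrib[symmetric] distrib_left)
  also have "\<dots> \<le> alloc k k * (b k + stair k k) + \<eta> * b k"
  proof (rule weighted_sum_le_single)
    fix i assume i: "i \<in> items M - {k}"
    show "b i + stair k i \<le> \<eta> * b k"
    proof (cases "i < k")
      case True
      then show ?thesis using L_large[of i] b_pos[of i] b_pos[OF k] \<eta>_nonneg i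
        by (simp add: stair_def) (smt (verit) mult_nonneg_nonneg)
    next
      case False
      then show ?thesis using b_steep[of i k] i by (simp add: stair_def)
    qed
  qed (use k alloc_nonneg sum_alloc_le_1 b_pos[OF k] \<eta>_nonneg in auto)
  finally have "c * b k \<le> (alloc k k + \<eta>) * b k" by (simp add: stair_def algebra_simps)
  then show ?thesis using b_pos[OF k] by simp
qed

lemma seller_payoff_last_ge: "- 2 * b M \<le> seller_payoff M"
proof -
  have M: "M \<in> items M" using M_pos by (simp add: items_def)
  have "0 < OPT M p buyer (seller M)"
    using OPT_ge_item[OF M, of p buyer "seller M"] M b_pos[OF M]
    by (simp add: bu_buyer su_seller stair_def)
  then have gain_nonneg: "0 \<le> gain M p mech buyer (seller M)"
    using ratio[OF valid_buyer valid_seller] c_pos by (meson mult_pos_pos less_imp_le order_trans)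
  have "(\<Sum>i\<in>items M. alloc M i * b i)
      \<le> (\<Sum>i\<in>items M. (if i = M then alloc M i * b M else 0) - alloc M i * stair M i / 2)"
  proof (rule sum_mono)
    fix i assume i: "i \<in> items M"
    show "alloc M i * b i \<le> (if i = M then alloc M i * b M else 0) - alloc M i * stair M i / 2"
      using i L_large[OF i] alloc_nonneg[OF i, of M] mult_left_mono[of "2 * b i" L "alloc M i"]
      by (auto simp: stair_def items_def)
  qed
  also have "\<dots> = alloc M M * b M - seller_payoff M / 2"
    using M by (simp add: sum_subtractf seller_payoff_def sum_divide_distrib)
  finally have "(\<Sum>i\<in>items M. alloc M i * b i) \<le> alloc M M * b M - seller_payoff M / 2" .
  moreover have "alloc M M * b M \<le> b M"
    using alloc_le_1[OF M] b_pos[OF M] by (simp add: mult_left_le_one_le)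
  ultimately show ?thesis using gain_nonneg unfolding gain_eq by linarith
qed

lemma seller_payoff_step:
  assumes "k \<in> items M" "Suc k \<in> items M"
  shows "seller_payoff (Suc k) + \<epsilon> * alloc (Suc k) (Suc k) \<le> seller_payoff k"
proof -
  have "seller_payoff (Suc k) + \<epsilon> * alloc (Suc k) (Suc k)
      = (\<Sum>i\<in>items M. alloc (Suc k) i * stair (Suc k) i + (if i = Suc k then \<epsilon> * alloc (Suc k) i else 0))"
    unfolding seller_payoff_def using assms(2) by (simp add: sum.distrib)
  also have "\<dots> \<le> (\<Sum>i\<in>items M. alloc (Suc k) i * stair k i)"
    using alloc_nonneg L_nonneg by (intro sum_mono) (auto simp: stair_def)
  also have "\<dots> = seller_util M p (mech buyer (seller (Suc k))) (seller k)"
    using seller_util_eq by (simp add: alloc_def)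
  also have "\<dots> \<le> seller_util M p (mech buyer (seller k)) (seller k)"
    using dsic valid_buyer valid_seller unfolding DSIC_def by blast
  also have "\<dots> = seller_payoff k"
    using seller_util_eq by (simp add: alloc_def seller_payoff_def)
  finally show ?thesis .
qed

lemma seller_payoff_first_le: "seller_payoff 1 \<le> \<epsilon> * (1 - alloc 1 1)"
proof -
  have one: "1 \<in> items M" using M_pos by (simp add: items_def)
  have "seller_payoff 1 = (\<Sum>i\<in>items M. \<epsilon> * alloc 1 i - (if i = 1 then \<epsilon> * alloc 1 i else 0))"
    unfolding seller_payoff_def by (rule sum.cong) (auto simp: stair_def items_def)
  also have "\<dots> = \<epsilon> * (\<Sum>i\<in>items M. alloc 1 i) - \<epsilon> * alloc 1 1"
    using one by (simp add: sum_subtractf sum_distrib_left)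
  also have "\<dots> \<le> \<epsilon> * 1 - \<epsilon> * alloc 1 1"
    using mult_left_mono[OF sum_alloc_le_1 \<epsilon>_nonneg] by simp
  finally show ?thesis by (simp add: algebra_simps)
qed

lemma seller_payoff_telescope:
  assumes "1 \<le> j" "j \<le> M"
  shows "seller_payoff M + \<epsilon> * (\<Sum>k\<in>{j<..M}. alloc k k) \<le> seller_payoff j"
  using assms(2,1)
proof (induction j rule: inc_induct)
  case base
  then show ?case by simp
next
  case (step n)
  have "{n<..M} = insert (Suc n) {Suc n<..M}" using step.hyps by auto
  then have "(\<Sum>k\<in>{n<..M}. alloc k k) = alloc (Suc n) (Suc n) + (\<Sum>k\<in>{Suc n<..M}. alloc k k)"
    by simp
  moreover have "seller_payoff (Suc n) + \<epsilon> * alloc (Suc n) (Suc n) \<le> seller_payoff n"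
    using step.prems step.hyps by (intro seller_payoff_step) (auto simp: items_def)
  ultimately show ?case using step.IH by (simp add: algebra_simps)
qed

theorem staircase_bound: "\<epsilon> * (real M * (c - \<eta>) - 1) \<le> 2 * b M"
proof -
  have "real (M - 1) * (c - \<eta>) \<le> (\<Sum>k\<in>{1<..M}. alloc k k)"
    using sum_mono[of "{1<..M}" "\<lambda>_. c - \<eta>" "\<lambda>k. alloc k k"] alloc_diagonal_ge
    by (simp add: items_def)
  then have "\<epsilon> * (real (M - 1) * (c - \<eta>)) \<le> \<epsilon> * (\<Sum>k\<in>{1<..M}. alloc k k)"
    using \<epsilon>_nonneg by (rule mult_left_mono)
  moreover have "\<epsilon> * (c - \<eta>) \<le> \<epsilon> * alloc 1 1"
    using alloc_diagonal_ge[of 1] M_pos \<epsilon>_nonneg by (intro mult_left_mono) (auto simp: items_def)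
  moreover have "real (M - 1) = real M - 1" using M_pos by simp
  ultimately show ?thesis
    using seller_payoff_telescope[of 1] seller_payoff_first_le seller_payoff_last_ge M_pos by (simp add: algebra_simps)
qed

end

lemma geometric_steep:
  fixes \<eta> \<epsilon> B :: real
  assumes "0 < \<eta>" "0 \<le> \<epsilon>" "1 \<le> B" "k < i" "i \<le> M"
  defines "A \<equiv> 1 + (B + \<epsilon>) / (\<eta> * B)"
  shows "B * A ^ (M - i) + \<epsilon> \<le> \<eta> * (B * A ^ (M - k))"
proof -
  define x where "x = B * A ^ (M - Suc k)"
  have "B \<le> x"
    using assms by (simp add: x_def A_def)
  have "M - k = Suc (M - Suc k)"
    using assms by simp
  then have "\<eta> * (B * A ^ (M - k)) = \<eta> * A * x"
    by (simp add: x_def mult_ac)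
  also have "\<dots> \<ge> (B + \<epsilon>) / B * x"
    using assms \<open>B \<le> x\<close> by (intro mult_right_mono) (auto simp: A_def field_simps)
  also have "(B + \<epsilon>) / B * x = x + \<epsilon> * (x / B)"
    using assms by (simp add: field_simps)
  also have "\<epsilon> * (x / B) \<ge> \<epsilon>"
    using mult_left_mono[OF \<open>B \<le> x\<close> assms(2)] assms by (simp add: field_simps mult.commute)
  moreover have "B * A ^ (M - i) \<le> x"
    using assms unfolding x_def A_def by (intro mult_left_mono power_increasing) auto
  ultimately show ?thesis by linarith
qed

lemma DSIC_gain_guarantee_le_inverse:
  assumes M: "1 \<le> M" and mech: "is_mechanism M mech" and dsic: "DSIC M p mech"
    and ratio: "\<And>beta sigma. valid_buyer M beta \<Longrightarrow> valid_seller M sigma \<Longrightarrow>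
      0 < OPT M p beta sigma \<Longrightarrow> c * OPT M p beta sigma \<le> gain M p mech beta sigma"
  shows "c \<le> 1 / real M"
proof (rule ccontr)
  assume "\<not> c \<le> 1 / real M"
  then have gap: "0 < real M * c - 1" using M by (simp add: field_simps)
  then have c_pos: "0 < c" using M by (smt (verit) mult_nonneg_nonpos of_nat_0_le_iff)
  define \<eta> where "\<eta> = (c - 1 / real M) / 2"
  define B where "B = 1 + (\<Sum>i\<in>items M. \<bar>p i\<bar>)"
  \<comment> \<open>large enough that \<epsilon> (M (c - \<eta>) - 1) = \<epsilon> (M c - 1) / 2 exceeds 2 B = 2 b M\<close>
  define \<epsilon> where "\<epsilon> = 4 * B / (real M * c - 1) + 1"
  define A where "A = 1 + (B + \<epsilon>) / (\<eta> * B)"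
  define b where "b i = B * A ^ (M - i)" for i
  have B: "1 \<le> B"
    unfolding B_def by (simp add: sum_nonneg)
  have p_le_B: "\<bar>p i\<bar> \<le> B" if "i \<in> items M" for i
    using member_le_sum[of i "items M" "\<lambda>i. \<bar>p i\<bar>"] that unfolding B_def by simp
  have \<eta>: "0 < \<eta>"
    using gap M by (simp add: \<eta>_def field_simps)
  have \<epsilon>: "0 < \<epsilon>"
    unfolding \<epsilon>_def using gap B by (intro add_nonneg_pos divide_nonneg_pos) auto
  have A: "1 \<le> A"
    using \<eta> \<epsilon> B by (simp add: A_def)
  have b_ge: "B \<le> b i" for i
    using A B by (simp add: b_def)
  have "staircase_profiles M p mech c b \<eta> \<epsilon> (2 * b 1)"
  proof
    show "b i + \<epsilon> \<le> \<eta> * b k" if "i \<in> items M" and "k < i" for i k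
      using geometric_steep[of \<eta> \<epsilon> B k i M] that \<eta> \<epsilon> B
      by (simp add: b_def A_def items_def)
    show "0 < b i" for i using b_ge[of i] B by linarith
    show "0 \<le> b i + p i" if "i \<in> items M" for i using b_ge[of i] p_le_B[OF that] by linarith
    show "2 * b i \<le> 2 * b 1" if "i \<in> items M" for i
      using that A B unfolding b_def by (intro mult_left_mono power_increasing) (auto simp: items_def)
  qed (use M mech dsic c_pos ratio \<eta> \<epsilon> in auto)
  then have "\<epsilon> * (real M * (c - \<eta>) - 1) \<le> 2 * b M"
    by (rule staircase_profiles.staircase_bound)
  moreover have "real M * (c - \<eta>) - 1 = (real M * c - 1) / 2"
    using M by (simp add: \<eta>_def field_simps)
  moreover have "\<epsilon> * ((real M * c - 1) / 2) = 2 * B + (real M * c - 1) / 2"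
    using gap by (simp add: \<epsilon>_def field_simps)
  ultimately show False
    using gap by (simp add: b_def)
qed

theorem corollary2:
  fixes M :: nat and p :: "nat \<Rightarrow> real" and mech :: mechanism
  assumes "M \<ge> 1"
    and "is_mechanism M mech"
    and "DSIC M p mech"
  shows "comp_ratio M p mech \<le> ereal (1 / real M)"
proof (rule ccontr)
  assume "\<not> comp_ratio M p mech \<le> ereal (1 / real M)"
  then have "ereal (1 / real M) < comp_ratio M p mech" by simp
  then obtain c where c_gt: "ereal (1 / real M) < ereal c" and c_lt: "ereal c < comp_ratio M p mech"
    using ereal_dense2 by blast
  have "c \<le> 1 / real M"
  proof (rule DSIC_gain_guarantee_le_inverse[OF assms])
    fix beta sigma
    assume "valid_buyer M beta" "valid_seller M sigma" "0 < OPT M p beta sigma"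
    then show "c * OPT M p beta sigma \<le> gain M p mech beta sigma"
      by (rule gain_ge_of_comp_ratio_ge[OF less_imp_le[OF c_lt]])
  qed
  with c_gt show False by simp
qed

end
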